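(* Let $F\in\mathbf F$ satisfy either (i) $\mathbf{NA^r}$, or (ii) both $\mathbf{NA^s}$ and $\mathbf{EF}$. Then $F$ satisfies $\mathbf{KP}$.
   Context: Fix $T\in\mathbb N$, $\mathbb T=\{0,\dots,T\}$, $d\ge1$, a complete probability space $(\Omega,\mathcal F,\mathbb P)$ and a filtration $\mathbb H=(\mathcal H_t)_{t\in\mathbb T}$ with $\mathcal H_T\subset\mathcal F$ (no other relation between $\mathbb H$ and the other processes is assumed). Equalities and inequalities between random variables are understood $\mathbb P$-a.s. $\mathbb M^d$ denotes the real $d\times d$ matrices. For $E\subset\mathbb M^d$ (or $E\subset\mathbb R^d$) and a $\sigma$-algebra $\mathcal G\subset\mathcal F$, $L^0(E;\mathcal G)$ is the set of $E$-valued $\mathcal G$-measurable random variables. A closed convex cone $\mathcal A\subset\mathbb M^d$ is fixed; $\mathbb L^0(\mathcal A;\mathbb H)$ denotes the set of $\mathcal A$-valued $\mathbb H$-adapted processes $(\eta_t)_{t\in\mathbb T}$. $\mathbb F$ is the set of continuous maps $f:\mathbb M^d\to\mathbb R^d$ such that (HF1) $f(\lambda a)=\lambda f(a)$ for all $\lambda\ge0$, $a\in\mathbb M^d$; (HF2) $f(\lambda a+\beta a')-(\lambda f(a)+\beta f(a'))\in\mathbb R^d_+$ for all $\lambda,\beta\ge0$, $a,a'\in\mathcal A$. $\mathbf F$ is the set of sequences $F=(F_t)_{t\in\mathbb T}$ of $\mathcal F$-measurable random maps $F_t:\Omega\times\mathbb M^d\to\mathbb R^d$ with $F_t(\omega,\cdot)\in\mathbb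 F$ for a.e. $\omega$ (no adaptedness to $\mathbb H$ is assumed); for a random matrix $\eta$, $F_t(\eta)(\omega)=F_t(\omega,\eta(\omega))$. $N_t(F)=\{F_t(\eta):\eta\in L^0(\mathcal A;\mathcal H_t)\}$, $N^0_t(F)=N_t(F)\cap(-N_t(F))$. For a process $\xi=(\xi_t)_{t\in\mathbb T}$, "$\xi\in N(F)$" means $\xi_t\in N_t(F)$ for all $t$, and "$\xi\in N^0(F)$" means $\xi_t\in N^0_t(F)$ for all $t$. $V_t(\xi)=\sum_{s=0}^t\xi_s$ and $A_t(F)=\{V_t(\xi)-r:\ \xi\in N(F),\ r\in L^0(\mathbb R^d_+;\mathcal F)\}$. Condition $\mathbf{KP}$: for all $\xi,\tilde\xi\in N(F)$, $V_T(\xi)+V_T(\tilde\xi)\in L^0(\mathbb R^d_+;\mathcal F)$ implies $\xi\in N^0(F)$ and $V_T(\xi)+V_T(\tilde\xi)=0$. Condition $\mathbf{NA^w}$ (for an element $G\in\mathbf F$): $A_T(G)\cap L^0(\mathbb R^d_+;\mathcal F)=\{0\}$. Condition $\mathbf{NA^s}$: $A_t(F)\cap\big(-N_t(F)+L^0(\mathbb R^d_+;\mathcal F)\big)\subset N^0_t(F)$ for all $t\in\mathbb T$. Condition $\mathbf{EF}$: $N^0_t(F)=\{0\}$ for all $t\in\mathbb T$. Condition $\mathbf{NA^r}$: there exists $G\in\mathbf F$ such that for all $\eta\in\mathbb L^0(\mathcal A;\mathbb H)$, $t\in\mathbb T$ and $i\le d$: (1) $G^i_t(\eta_t)\ge F^i_t(\eta_t)$;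 (2) if $F_t(\eta_t)\notin N^0_t(F)$ then the event $\{\exists k\le d: G^k_t(\eta_t)>F^k_t(\eta_t)\}$ has positive probability; (3) $\mathbf{NA^w}$ holds for $G$. *)

theory Defs
  imports "HOL-Probability.Probability"
begin

type_synonym 'd mat = "real ^ 'd ^ 'd"
type_synonym ('a, 'd) rmap = "nat \<Rightarrow> 'a \<Rightarrow> 'd mat \<Rightarrow> real ^ 'd"

definition setting :: "'a measure \<Rightarrow> (nat \<Rightarrow> 'a set set) \<Rightarrow> nat \<Rightarrow> ('d::finite) mat set \<Rightarrow> bool" where
  "setting M H T A \<longleftrightarrow>
     prob_space M \<and>
     (\<forall>N \<in> null_sets M. \<forall>B. B \<subseteq> N \<longrightarrow> B \<in> sets M) \<and>
     (\<forall>t\<le>T. sigma_algebra (space M) (H t)) \<and>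
     (\<forall>s t. s \<le> t \<and> t \<le> T \<longrightarrow> H s \<subseteq> H t) \<and>
     H T \<subseteq> sets M \<and>
     closed A \<and> convex A \<and> cone A \<and> A \<noteq> {}"

(* L^0(E;G): classes (modulo P-a.s. equality) of E-valued G-measurable random variables. *)
definition L0 :: "'a measure \<Rightarrow> 'a set set \<Rightarrow> ('b::topological_space) set \<Rightarrow> ('a \<Rightarrow> 'b) set" where
  "L0 M G E = {X. \<exists>Y. Y \<in> borel_measurable (sigma (space M) G) \<and> (\<forall>\<omega>\<in>space M. Y \<omega> \<in> E)
                      \<and> (AE \<omega> in M. X \<omega> = Y \<omega>)}"

definition Rplus :: "(real ^ 'd) set" where
  "Rplus = {x. \<forall>i. 0 \<le> x $ i}"

definition classF :: "('d::finite) mat set \<Rightarrow> ('d mat \<Rightarrow> real ^ 'd) \<Rightarrow> bool" where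
  "classF A f \<longleftrightarrow> continuous_on UNIV f \<and>
     (\<forall>l::real. \<forall>a. l \<ge> 0 \<longrightarrow> f (l *\<^sub>R a) = l *\<^sub>R f a) \<and>
     (\<forall>l::real. \<forall>b::real. \<forall>a\<in>A. \<forall>a'\<in>A. l \<ge> 0 \<longrightarrow> b \<ge> 0 \<longrightarrow>
        (\<forall>i. 0 \<le> (f (l *\<^sub>R a + b *\<^sub>R a') - (l *\<^sub>R f a + b *\<^sub>R f a')) $ i))"

definition boldF :: "'a measure \<Rightarrow> nat \<Rightarrow> ('d::finite) mat set \<Rightarrow> ('a, 'd) rmap \<Rightarrow> bool" where
  "boldF M T A F \<longleftrightarrow> (\<forall>t\<le>T. (\<lambda>(\<omega>, a). F t \<omega> a) \<in> borel_measurable (M \<Otimes>\<^sub>M borel)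
                              \<and> (AE \<omega> in M. classF A (F t \<omega>)))"

definition Nset :: "'a measure \<Rightarrow> (nat \<Rightarrow> 'a set set) \<Rightarrow> ('d::finite) mat set \<Rightarrow> ('a, 'd) rmap
                    \<Rightarrow> nat \<Rightarrow> ('a \<Rightarrow> real ^ 'd) set" where
  "Nset M H A F t = {\<xi>. \<exists>\<eta> \<in> L0 M (H t) A. AE \<omega> in M. \<xi> \<omega> = F t \<omega> (\<eta> \<omega>)}"

definition N0set :: "'a measure \<Rightarrow> (nat \<Rightarrow> 'a set set) \<Rightarrow> ('d::finite) mat set \<Rightarrow> ('a, 'd) rmap
                    \<Rightarrow> nat \<Rightarrow> ('a \<Rightarrow> real ^ 'd) set" where
  "N0set M H A F t = {\<xi>. \<xi> \<in> Nset M H A F t \<and> (\<lambda>\<omega>. - \<xi> \<omega>) \<in> Nset M H A F t}"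

definition inN :: "'a measure \<Rightarrow> (nat \<Rightarrow> 'a set set) \<Rightarrow> nat \<Rightarrow> ('d::finite) mat set \<Rightarrow> ('a, 'd) rmap
                    \<Rightarrow> (nat \<Rightarrow> 'a \<Rightarrow> real ^ 'd) \<Rightarrow> bool" where
  "inN M H T A F \<xi> \<longleftrightarrow> (\<forall>t\<le>T. \<xi> t \<in> Nset M H A F t)"

definition inN0 :: "'a measure \<Rightarrow> (nat \<Rightarrow> 'a set set) \<Rightarrow> nat \<Rightarrow> ('d::finite) mat set \<Rightarrow> ('a, 'd) rmap
                    \<Rightarrow> (nat \<Rightarrow> 'a \<Rightarrow> real ^ 'd) \<Rightarrow> bool" where
  "inN0 M H T A F \<xi> \<longleftrightarrow> (\<forall>t\<le>T. \<xi> t \<in> N0set M H A F t)"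

definition V :: "nat \<Rightarrow> (nat \<Rightarrow> 'a \<Rightarrow> real ^ 'd) \<Rightarrow> 'a \<Rightarrow> real ^ 'd" where
  "V t \<xi> \<omega> = (\<Sum>s\<le>t. \<xi> s \<omega>)"

definition Aset :: "'a measure \<Rightarrow> (nat \<Rightarrow> 'a set set) \<Rightarrow> nat \<Rightarrow> ('d::finite) mat set \<Rightarrow> ('a, 'd) rmap
                    \<Rightarrow> nat \<Rightarrow> ('a \<Rightarrow> real ^ 'd) set" where
  "Aset M H T A F t = {X. \<exists>\<xi> r. inN M H T A F \<xi> \<and> r \<in> L0 M (sets M) Rplus
                          \<and> (AE \<omega> in M. X \<omega> = V t \<xi> \<omega> - r \<omega>)}"

definition KP :: "'a measure \<Rightarrow> (nat \<Rightarrow> 'a set set) \<Rightarrow> nat \<Rightarrow> ('d::finite) mat set \<Rightarrow> ('a, 'd) rmap \<Rightarrow> bool" where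
  "KP M H T A F \<longleftrightarrow> (\<forall>\<xi> \<xi>'. inN M H T A F \<xi> \<and> inN M H T A F \<xi>'
        \<and> (\<lambda>\<omega>. V T \<xi> \<omega> + V T \<xi>' \<omega>) \<in> L0 M (sets M) Rplus
        \<longrightarrow> inN0 M H T A F \<xi> \<and> (AE \<omega> in M. V T \<xi> \<omega> + V T \<xi>' \<omega> = 0))"

definition NAw :: "'a measure \<Rightarrow> (nat \<Rightarrow> 'a set set) \<Rightarrow> nat \<Rightarrow> ('d::finite) mat set \<Rightarrow> ('a, 'd) rmap \<Rightarrow> bool" where
  "NAw M H T A G \<longleftrightarrow> (\<forall>X. X \<in> Aset M H T A G T \<and> X \<in> L0 M (sets M) Rplus \<longrightarrow> (AE \<omega> in M. X \<omega> = 0))"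

definition NAs :: "'a measure \<Rightarrow> (nat \<Rightarrow> 'a set set) \<Rightarrow> nat \<Rightarrow> ('d::finite) mat set \<Rightarrow> ('a, 'd) rmap \<Rightarrow> bool" where
  "NAs M H T A F \<longleftrightarrow> (\<forall>t\<le>T. \<forall>X. X \<in> Aset M H T A F t \<and>
        (\<exists>\<zeta> \<in> Nset M H A F t. \<exists>r \<in> L0 M (sets M) Rplus. AE \<omega> in M. X \<omega> = - \<zeta> \<omega> + r \<omega>)
        \<longrightarrow> X \<in> N0set M H A F t)"

definition EF :: "'a measure \<Rightarrow> (nat \<Rightarrow> 'a set set) \<Rightarrow> nat \<Rightarrow> ('d::finite) mat set \<Rightarrow> ('a, 'd) rmap \<Rightarrow> bool" where
  "EF M H T A F \<longleftrightarrow> (\<forall>t\<le>T. \<forall>\<xi> \<in> N0set M H A F t. AE \<omega> in M. \<xi> \<omega> = 0)"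

definition NAr :: "'a measure \<Rightarrow> (nat \<Rightarrow> 'a set set) \<Rightarrow> nat \<Rightarrow> ('d::finite) mat set \<Rightarrow> ('a, 'd) rmap \<Rightarrow> bool" where
  "NAr M H T A F \<longleftrightarrow> (\<exists>G. boldF M T A G \<and>
     (\<forall>\<eta>. (\<forall>t\<le>T. \<eta> t \<in> L0 M (H t) A) \<longrightarrow>
        (\<forall>t\<le>T.
           (\<forall>i. AE \<omega> in M. G t \<omega> (\<eta> t \<omega>) $ i \<ge> F t \<omega> (\<eta> t \<omega>) $ i) \<and>
           ((\<lambda>\<omega>. F t \<omega> (\<eta> t \<omega>)) \<notin> N0set M H A F t \<longrightarrow>
              measure M {\<omega> \<in> space M. \<exists>k. G t \<omega> (\<eta> t \<omega>) $ k > F t \<omega> (\<eta> t \<omega>) $ k} > 0))) \<and>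
     NAw M H T A G)"

end

theory Submission imports Defs begin

(* Under NA^r, let G be the dominating market. Along the strategies of \<xi> and \<xi>', the G-gains
  dominate the F-gains, whose sum is nonnegative; by superadditivity (HF2) the sum of the G-gains
  lies in A_T(G), so NA^w makes it vanish. Squeezing then forces G = F along both strategies and
  a zero total gain, and since G exceeds F with positive probability outside N^0 every step of \<xi>
  lies in N^0.
  Under NA^s and EF argue backwards in time. If the wealth at time t is nonnegative, dropping the
  last step of \<xi> exhibits -\<xi>_t plus a nonnegative variable as an element of A_t, which NA^s and
  EF force to vanish; so \<xi>_t \<ge> 0, and a nonnegative element of N_t lies in A_t \<inter> (-N_t + L^0_+),
  hence is zero. By symmetry \<xi>'_t = 0 as well, and the wealth at time t - 1 is again nonnegative. *)

lemma sums_squeezed: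
  fixes a b c d :: "'i \<Rightarrow> 'b::ordered_ab_group_add"
  assumes "finite I" "\<forall>s\<in>I. b s \<le> a s" "\<forall>s\<in>I. d s \<le> c s"
    and "sum a I + sum c I = 0" "0 \<le> sum b I + sum d I"
  shows "(\<forall>s\<in>I. a s = b s) \<and> sum b I + sum d I = 0"
proof -
  have gap_a: "0 \<le> (\<Sum>s\<in>I. a s - b s)" and gap_c: "0 \<le> (\<Sum>s\<in>I. c s - d s)"
    using assms(2,3) by (auto intro: sum_nonneg)
  have "(\<Sum>s\<in>I. a s - b s) + (\<Sum>s\<in>I. c s - d s) = - (sum b I + sum d I)"
    using assms(4) by (simp add: sum_subtractf algebra_simps)
  also have "\<dots> \<le> 0" using assms(5) by (simp only: neg_le_0_iff_le)
  finally have "(\<Sum>s\<in>I. a s - b s) = 0 \<and> (\<Sum>s\<in>I. c s - d s) = 0"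
    using gap_a gap_c by (metis add_nonneg_eq_0_iff order.antisym add_nonneg_nonneg)
  moreover have "\<forall>s\<in>I. a s - b s = 0"
    using calculation assms(1,2) by (subst sum_nonneg_eq_0_iff[symmetric]) auto
  ultimately show ?thesis
    using assms(4) by (simp add: sum_subtractf)
qed

lemma sums_squeezed_vec:
  fixes a b c d :: "'i \<Rightarrow> real^'n"
  assumes "finite I" "\<forall>s\<in>I. b s \<le> a s" "\<forall>s\<in>I. d s \<le> c s"
    and "sum a I + sum c I = 0" "0 \<le> sum b I + sum d I"
  shows "(\<forall>s\<in>I. a s = b s) \<and> sum b I + sum d I = 0"
proof -
  have "(\<forall>s\<in>I. a s $ i = b s $ i) \<and> (\<Sum>s\<in>I. b s $ i) + (\<Sum>s\<in>I. d s $ i) = 0" for i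
    using sums_squeezed[OF assms(1), of "\<lambda>s. b s $ i" "\<lambda>s. a s $ i" "\<lambda>s. d s $ i" "\<lambda>s. c s $ i"] assms
    by (auto simp: less_eq_vec_def vec_eq_iff sum_component)
  then show ?thesis by (simp add: vec_eq_iff sum_component)
qed

lemma measure_eq_0_AE: "AE x in M. \<not> P x \<Longrightarrow> measure M {x \<in> space M. P x} = 0"
  by (simp add: measure_def emeasure_eq_0_AE)

lemma measurable_sigma_subset:
  assumes "G \<subseteq> sets M" "Y \<in> borel_measurable (sigma (space M) G)"
  shows "Y \<in> borel_measurable M"
proof -
  have "G \<subseteq> Pow (space M)" using assms(1) sets.sets_into_space by blast
  then have "sigma (space M) G \<rightarrow>\<^sub>M (borel :: 'b measure) \<subseteq> M \<rightarrow>\<^sub>M borel"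
    using assms(1) by (intro measurable_mono) (auto simp: sets.sigma_sets_subset)
  then show ?thesis using assms(2) by blast
qed

lemma V_Suc: "V (Suc t) \<xi> \<omega> = V t \<xi> \<omega> + \<xi> (Suc t) \<omega>"
  unfolding V_def by simp

lemma V_drop_last: "V t (\<xi>(t := (\<lambda>\<omega>. 0))) \<omega> = V t \<xi> \<omega> - \<xi> t \<omega>"
  by (cases t) (simp_all add: V_Suc, simp_all add: V_def)

lemma V_single: "V t (\<lambda>s \<omega>. if s = t then \<xi> \<omega> else 0) \<omega> = \<xi> \<omega>"
  unfolding V_def by simp

lemma V_AE_cong:
  assumes "\<forall>s\<le>T. AE \<omega> in M. \<xi> s \<omega> = \<xi>' s \<omega>" "t \<le> T"
  shows "AE \<omega> in M. V t \<xi> \<omega> = V t \<xi>' \<omega>"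
proof -
  have "AE \<omega> in M. \<forall>s\<in>{..T}. \<xi> s \<omega> = \<xi>' s \<omega>"
    using assms(1) by (intro AE_finite_allI) auto
  then show ?thesis
    by eventually_elim (use assms(2) in \<open>auto simp: V_def intro: sum.cong\<close>)
qed

lemma V_measurable:
  "(\<And>s. s \<le> t \<Longrightarrow> \<xi> s \<in> borel_measurable M) \<Longrightarrow> V t \<xi> \<in> borel_measurable M"
  unfolding V_def by (intro borel_measurable_sum) auto

lemma L0_AE_mem: "X \<in> L0 M G E \<Longrightarrow> AE \<omega> in M. X \<omega> \<in> E"
  unfolding L0_def by (auto elim!: AE_mp)

lemma L0_I: "Y \<in> borel_measurable (sigma (space M) G) \<Longrightarrow> (\<forall>\<omega>\<in>space M. Y \<omega> \<in> E) \<Longrightarrow> Y \<in> L0 M G E"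
  unfolding L0_def by auto

lemma L0_sets_I:
  assumes "E \<in> sets borel" "e \<in> E" "f \<in> borel_measurable M"
    and "AE \<omega> in M. X \<omega> = f \<omega>" "AE \<omega> in M. X \<omega> \<in> E"
  shows "X \<in> L0 M (sets M) E"
proof -
  define Y where "Y \<omega> = (if f \<omega> \<in> E then f \<omega> else e)" for \<omega>
  have "{\<omega> \<in> space M. f \<omega> \<in> E} \<in> sets M"
    using measurable_sets[OF assms(3,1)] by (simp add: vimage_def Int_def conj_commute)
  then have "Y \<in> borel_measurable M"
    unfolding Y_def using assms(3) by (intro measurable_If) simp_all
  then have "Y \<in> borel_measurable (sigma (space M) (sets M))"
    by (subst measurable_cong_sets[OF _ refl]) (simp_all add: sets.sigma_sets_eq)
  moreover have "AE \<omega> in M. X \<omega> = Y \<omega>"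
    using assms(4,5) by eventually_elim (simp add: Y_def)
  ultimately show ?thesis
    using assms(2) unfolding L0_def Y_def by auto
qed

lemma L0_Rplus_I:
  assumes "\<exists>f \<in> borel_measurable M. AE \<omega> in M. X \<omega> = f \<omega>" "AE \<omega> in M. X \<omega> \<in> Rplus"
  shows "X \<in> L0 M (sets M) Rplus"
proof -
  have "Rplus \<in> sets (borel :: (real^'d) measure)"
    unfolding Rplus_def by (intro borel_closed closed_Collect_all closed_Collect_le continuous_intros)
  moreover have "0 \<in> Rplus" by (simp add: Rplus_def)
  ultimately show ?thesis using assms L0_sets_I by blast
qed

lemma Rplus_iff_nonneg: "x \<in> Rplus \<longleftrightarrow> 0 \<le> x"
  by (simp add: Rplus_def less_eq_vec_def)

lemma classF_zero: "classF A f \<Longrightarrow> f 0 = 0"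
  unfolding classF_def by (metis order_refl scale_zero_left)

lemma classF_superadditive:
  assumes "classF A f" "a \<in> A" "b \<in> A"
  shows "f a + f b \<le> f (a + b)"
proof -
  have "\<forall>l::real. \<forall>l'::real. \<forall>a\<in>A. \<forall>a'\<in>A. 0 \<le> l \<longrightarrow> 0 \<le> l' \<longrightarrow>
      (\<forall>i. 0 \<le> (f (l *\<^sub>R a + l' *\<^sub>R a') - (l *\<^sub>R f a + l' *\<^sub>R f a')) $ i)"
    using assms(1) unfolding classF_def by blast
  then have "\<forall>i. 0 \<le> (f (a + b) - (f a + f b)) $ i"
    using assms(2,3) by (metis scaleR_one zero_le_one)
  then show ?thesis by (simp add: less_eq_vec_def)
qed

lemma setting_filtration_subset: "setting M H T A \<Longrightarrow> t \<le> T \<Longrightarrow> H t \<subseteq> sets M"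
  unfolding setting_def by (meson order_refl subset_trans)

lemma setting_convex_cone: "setting M H T A \<Longrightarrow> convex_cone A"
  unfolding setting_def by (meson Convex.cone_def conic_def convex_cone_def)

(* Pointwise A-valued, H_t-measurable representatives of elements of L^0(A;H): unlike the
  a.e.-classes in L0, F_t composed with them is measurable. *)
definition adapted_in :: "'a measure \<Rightarrow> (nat \<Rightarrow> 'a set set) \<Rightarrow> nat \<Rightarrow> 'b set \<Rightarrow> (nat \<Rightarrow> 'a \<Rightarrow> 'b::topological_space) \<Rightarrow> bool" where
  "adapted_in M H T A Y \<longleftrightarrow>
     (\<forall>t\<le>T. Y t \<in> borel_measurable (sigma (space M) (H t)) \<and> (\<forall>\<omega>\<in>space M. Y t \<omega> \<in> A))"

lemma adapted_in_L0: "adapted_in M H T A Y \<Longrightarrow> t \<le> T \<Longrightarrow> Y t \<in> L0 M (H t) A"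
  unfolding adapted_in_def by (auto intro: L0_I)

lemma adapted_in_add:
  fixes Y Y' :: "nat \<Rightarrow> 'a \<Rightarrow> 'b::euclidean_space"
  assumes "convex_cone A" "adapted_in M H T A Y" "adapted_in M H T A Y'"
  shows "adapted_in M H T A (\<lambda>t \<omega>. Y t \<omega> + Y' t \<omega>)"
  using assms(2,3) unfolding adapted_in_def
  by (auto intro!: borel_measurable_add convex_cone_add[OF assms(1)])

lemma measurable_F_comp:
  assumes "setting M H T A" "boldF M T A F" "t \<le> T" "Y \<in> borel_measurable (sigma (space M) (H t))"
  shows "(\<lambda>\<omega>. F t \<omega> (Y \<omega>)) \<in> borel_measurable M"
proof -
  have "Y \<in> borel_measurable M"
    using measurable_sigma_subset[OF setting_filtration_subset[OF assms(1,3)] assms(4)] .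
  moreover have "(\<lambda>(\<omega>, a). F t \<omega> a) \<in> borel_measurable (M \<Otimes>\<^sub>M borel)"
    using assms(2,3) unfolding boldF_def by blast
  ultimately show ?thesis
    using measurable_compose[OF measurable_Pair[OF measurable_ident_sets[OF refl]]] by fastforce
qed

lemma measurable_F_adapted:
  "setting M H T A \<Longrightarrow> boldF M T A F \<Longrightarrow> adapted_in M H T A Y \<Longrightarrow> t \<le> T \<Longrightarrow>
    (\<lambda>\<omega>. F t \<omega> (Y t \<omega>)) \<in> borel_measurable M"
  unfolding adapted_in_def by (blast intro: measurable_F_comp)

lemma inN_adaptedI: "adapted_in M H T A Y \<Longrightarrow> inN M H T A F (\<lambda>t \<omega>. F t \<omega> (Y t \<omega>))"
  unfolding inN_def Nset_def by (auto intro: adapted_in_L0)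

lemma Nset_E:
  assumes "\<zeta> \<in> Nset M H A F t"
  obtains Y where "Y \<in> borel_measurable (sigma (space M) (H t))" "\<forall>\<omega>\<in>space M. Y \<omega> \<in> A"
    "AE \<omega> in M. \<zeta> \<omega> = F t \<omega> (Y \<omega>)"
proof -
  obtain \<eta> where \<eta>: "\<eta> \<in> L0 M (H t) A" "AE \<omega> in M. \<zeta> \<omega> = F t \<omega> (\<eta> \<omega>)"
    using assms unfolding Nset_def by blast
  then obtain Y where "Y \<in> borel_measurable (sigma (space M) (H t))" "\<forall>\<omega>\<in>space M. Y \<omega> \<in> A"
      "AE \<omega> in M. \<eta> \<omega> = Y \<omega>"
    unfolding L0_def by blast
  moreover from this(3) \<eta>(2) have "AE \<omega> in M. \<zeta> \<omega> = F t \<omega> (Y \<omega>)" by eventually_elim simp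
  ultimately show thesis using that by blast
qed

lemma inN_adaptedE:
  assumes "inN M H T A F \<xi>"
  obtains Y where "adapted_in M H T A Y" "\<forall>t\<le>T. AE \<omega> in M. \<xi> t \<omega> = F t \<omega> (Y t \<omega>)"
proof -
  have "\<exists>Y. t \<le> T \<longrightarrow> Y \<in> borel_measurable (sigma (space M) (H t)) \<and> (\<forall>\<omega>\<in>space M. Y \<omega> \<in> A)
      \<and> (AE \<omega> in M. \<xi> t \<omega> = F t \<omega> (Y \<omega>))" for t
  proof (cases "t \<le> T")
    case True
    then have "\<xi> t \<in> Nset M H A F t" using assms unfolding inN_def by simp
    then obtain Y where "Y \<in> borel_measurable (sigma (space M) (H t))" "\<forall>\<omega>\<in>space M. Y \<omega> \<in> A"
        "AE \<omega> in M. \<xi> t \<omega> = F t \<omega> (Y \<omega>)"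
      by (rule Nset_E)
    then show ?thesis by (intro exI[of _ Y]) simp
  qed simp
  from choice[OF allI[OF this]] obtain Y where "\<forall>t. t \<le> T \<longrightarrow> Y t \<in> borel_measurable (sigma (space M) (H t))
      \<and> (\<forall>\<omega>\<in>space M. Y t \<omega> \<in> A) \<and> (AE \<omega> in M. \<xi> t \<omega> = F t \<omega> (Y t \<omega>))" ..
  then show thesis by (intro that[of Y]) (simp_all add: adapted_in_def)
qed

lemma Nset_measurable_version:
  assumes "setting M H T A" "boldF M T A F" "t \<le> T" "\<zeta> \<in> Nset M H A F t"
  obtains f where "f \<in> borel_measurable M" "AE \<omega> in M. \<zeta> \<omega> = f \<omega>"
  using Nset_E[OF assms(4)] measurable_F_comp[OF assms(1-3)] by metis

lemma V_measurable_version: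
  assumes "setting M H T A" "boldF M T A F" "inN M H T A F \<xi>" "t \<le> T"
  obtains f where "f \<in> borel_measurable M" "AE \<omega> in M. V t \<xi> \<omega> = f \<omega>"
proof -
  obtain Y where Y: "adapted_in M H T A Y" "\<forall>s\<le>T. AE \<omega> in M. \<xi> s \<omega> = F s \<omega> (Y s \<omega>)"
    using inN_adaptedE[OF assms(3)] .
  have "V t (\<lambda>s \<omega>. F s \<omega> (Y s \<omega>)) \<in> borel_measurable M"
    using assms(4) by (intro V_measurable measurable_F_adapted[OF assms(1,2) Y(1)]) simp
  then show thesis using that V_AE_cong[OF Y(2) assms(4)] by blast
qed

lemma Nset_AE_cong:
  assumes "\<zeta> \<in> Nset M H A F t" "AE \<omega> in M. \<zeta> \<omega> = \<zeta>' \<omega>"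
  shows "\<zeta>' \<in> Nset M H A F t"
proof -
  obtain \<eta> where "\<eta> \<in> L0 M (H t) A" "AE \<omega> in M. \<zeta> \<omega> = F t \<omega> (\<eta> \<omega>)"
    using assms(1) unfolding Nset_def by blast
  moreover from this(2) assms(2) have "AE \<omega> in M. \<zeta>' \<omega> = F t \<omega> (\<eta> \<omega>)" by eventually_elim simp
  ultimately show ?thesis unfolding Nset_def by blast
qed

lemma N0set_AE_cong:
  assumes "\<zeta> \<in> N0set M H A F t" "AE \<omega> in M. \<zeta> \<omega> = \<zeta>' \<omega>"
  shows "\<zeta>' \<in> N0set M H A F t"
proof -
  from assms(2) have "AE \<omega> in M. - \<zeta> \<omega> = - \<zeta>' \<omega>" by eventually_elim simp
  then show ?thesis using assms unfolding N0set_def by (auto intro: Nset_AE_cong)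
qed

lemma zero_in_Nset:
  assumes "setting M H T A" "boldF M T A F" "t \<le> T"
  shows "(\<lambda>\<omega>. 0) \<in> Nset M H A F t"
proof -
  have "(\<lambda>\<omega>. 0) \<in> L0 M (H t) A"
    using convex_cone_contains_0[OF setting_convex_cone[OF assms(1)]] by (intro L0_I) auto
  moreover have "AE \<omega> in M. classF A (F t \<omega>)" using assms(2,3) unfolding boldF_def by blast
  then have "AE \<omega> in M. 0 = F t \<omega> 0" by eventually_elim (simp add: classF_zero)
  ultimately show ?thesis unfolding Nset_def by (intro CollectI bexI[where x="\<lambda>\<omega>. 0"]) simp_all
qed

lemma AE_zero_in_N0set:
  assumes "setting M H T A" "boldF M T A F" "t \<le> T" "AE \<omega> in M. \<zeta> \<omega> = 0"
  shows "\<zeta> \<in> N0set M H A F t"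
proof -
  note zero = zero_in_Nset[OF assms(1-3)]
  from assms(4) have "AE \<omega> in M. 0 = \<zeta> \<omega>" by eventually_elim simp
  then have pos: "\<zeta> \<in> Nset M H A F t" by (rule Nset_AE_cong[OF zero])
  from assms(4) have "AE \<omega> in M. 0 = - \<zeta> \<omega>" by eventually_elim simp
  then have "(\<lambda>\<omega>. - \<zeta> \<omega>) \<in> Nset M H A F t" by (rule Nset_AE_cong[OF zero])
  with pos show ?thesis unfolding N0set_def by simp
qed

lemma Nset_subset_Aset:
  assumes "setting M H T A" "boldF M T A F" "t \<le> T" "\<zeta> \<in> Nset M H A F t"
  shows "\<zeta> \<in> Aset M H T A F t"
proof -
  define \<xi> where "\<xi> = (\<lambda>s \<omega>. if s = t then \<zeta> \<omega> else 0)"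
  have "inN M H T A F \<xi>"
    unfolding inN_def
  proof (intro allI impI)
    fix s assume "s \<le> T"
    then show "\<xi> s \<in> Nset M H A F s"
      using assms(4) zero_in_Nset[OF assms(1,2)] unfolding \<xi>_def by (cases "s = t") simp_all
  qed
  moreover have "(\<lambda>\<omega>. 0) \<in> L0 M (sets M) Rplus"
    by (rule L0_Rplus_I) (auto simp: Rplus_def)
  moreover have "V t \<xi> \<omega> = \<zeta> \<omega>" for \<omega>
    unfolding \<xi>_def by (rule V_single)
  ultimately show ?thesis unfolding Aset_def by fastforce
qed

lemma wealth_sum_in_Aset:
  assumes set: "setting M H T A" and bF: "boldF M T A F"
    and "inN M H T A F \<xi>" "inN M H T A F \<xi>'" and tT: "t \<le> T"
  shows "(\<lambda>\<omega>. V t \<xi> \<omega> + V t \<xi>' \<omega>) \<in> Aset M H T A F t"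
proof -
  obtain Y where Y: "adapted_in M H T A Y" "\<forall>s\<le>T. AE \<omega> in M. \<xi> s \<omega> = F s \<omega> (Y s \<omega>)"
    using inN_adaptedE[OF assms(3)] .
  obtain Y' where Y': "adapted_in M H T A Y'" "\<forall>s\<le>T. AE \<omega> in M. \<xi>' s \<omega> = F s \<omega> (Y' s \<omega>)"
    using inN_adaptedE[OF assms(4)] .
  define Z where "Z t \<omega> = Y t \<omega> + Y' t \<omega>" for t \<omega>
  have Z: "adapted_in M H T A Z"
    unfolding Z_def by (rule adapted_in_add[OF setting_convex_cone[OF set] Y(1) Y'(1)])
  define gap where "gap \<omega> = (\<Sum>s\<le>t. F s \<omega> (Z s \<omega>) - F s \<omega> (Y s \<omega>) - F s \<omega> (Y' s \<omega>))" for \<omega>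
  have "gap \<in> borel_measurable M"
    unfolding gap_def using tT Y(1) Y'(1) Z
    by (intro borel_measurable_sum borel_measurable_diff measurable_F_adapted[OF set bF]) auto
  moreover have "AE \<omega> in M. gap \<omega> \<in> Rplus"
  proof -
    have "AE \<omega> in M. \<forall>s\<in>{..T}. classF A (F s \<omega>)"
      using bF by (intro AE_finite_allI) (auto simp: boldF_def)
    with AE_space show ?thesis
    proof eventually_elim
      case (elim \<omega>)
      then have "F s \<omega> (Y s \<omega>) + F s \<omega> (Y' s \<omega>) \<le> F s \<omega> (Z s \<omega>)" if "s \<le> t" for s
        using Y(1) Y'(1) tT that unfolding Z_def adapted_in_def
        by (intro classF_superadditive) auto
      then show "gap \<omega> \<in> Rplus"
        unfolding gap_def Rplus_def less_eq_vec_def by (auto intro!: sum_nonneg simp: algebra_simps)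
    qed
  qed
  ultimately have "gap \<in> L0 M (sets M) Rplus" by (intro L0_Rplus_I) auto
  moreover have "AE \<omega> in M. V t \<xi> \<omega> + V t \<xi>' \<omega> = V t (\<lambda>s \<omega>. F s \<omega> (Z s \<omega>)) \<omega> - gap \<omega>"
    using V_AE_cong[OF Y(2) tT] V_AE_cong[OF Y'(2) tT]
    by eventually_elim (simp add: gap_def V_def sum_subtractf)
  ultimately show ?thesis
    unfolding Aset_def using inN_adaptedI[OF Z] by blast
qed

lemma NAs_EF_vanish:
  assumes "NAs M H T A F" "EF M H T A F" "t \<le> T" "X \<in> Aset M H T A F t"
    and "\<zeta> \<in> Nset M H A F t" "r \<in> L0 M (sets M) Rplus" "AE \<omega> in M. X \<omega> = - \<zeta> \<omega> + r \<omega>"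
  shows "AE \<omega> in M. X \<omega> = 0"
proof -
  have "X \<in> N0set M H A F t"
    using assms(1,3-7) unfolding NAs_def by blast
  then show ?thesis using assms(2,3) unfolding EF_def by blast
qed

lemma NAs_EF_nonneg_Nset_zero:
  assumes set: "setting M H T A" and bF: "boldF M T A F"
    and nas: "NAs M H T A F" and ef: "EF M H T A F" and tT: "t \<le> T"
    and \<zeta>: "\<zeta> \<in> Nset M H A F t" and nonneg: "AE \<omega> in M. \<zeta> \<omega> \<in> Rplus"
  shows "AE \<omega> in M. \<zeta> \<omega> = 0"
proof (rule NAs_EF_vanish[OF nas ef tT _ zero_in_Nset[OF set bF tT]])
  show "\<zeta> \<in> Aset M H T A F t" using Nset_subset_Aset[OF set bF tT \<zeta>] .
  obtain f where "f \<in> borel_measurable M" "AE \<omega> in M. \<zeta> \<omega> = f \<omega>"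
    using Nset_measurable_version[OF set bF tT \<zeta>] .
  then show "\<zeta> \<in> L0 M (sets M) Rplus" using nonneg by (intro L0_Rplus_I) blast+
qed simp

lemma NAs_EF_last_step_zero:
  assumes set: "setting M H T A" and bF: "boldF M T A F"
    and nas: "NAs M H T A F" and ef: "EF M H T A F" and tT: "t \<le> T"
    and \<xi>: "inN M H T A F \<xi>" and \<xi>': "inN M H T A F \<xi>'"
    and nonneg: "AE \<omega> in M. V t \<xi> \<omega> + V t \<xi>' \<omega> \<in> Rplus"
  shows "AE \<omega> in M. \<xi> t \<omega> = 0"
proof -
  define S where "S \<omega> = V t \<xi> \<omega> + V t \<xi>' \<omega>" for \<omega>
  obtain f f' where "f \<in> borel_measurable M" "AE \<omega> in M. V t \<xi> \<omega> = f \<omega>"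
      "f' \<in> borel_measurable M" "AE \<omega> in M. V t \<xi>' \<omega> = f' \<omega>"
    using V_measurable_version[OF set bF \<xi> tT] V_measurable_version[OF set bF \<xi>' tT] by metis
  moreover from this(2,4) have "AE \<omega> in M. S \<omega> = f \<omega> + f' \<omega>"
    unfolding S_def by eventually_elim simp
  ultimately have "\<exists>g \<in> borel_measurable M. AE \<omega> in M. S \<omega> = g \<omega>"
    by (intro bexI[of _ "\<lambda>\<omega>. f \<omega> + f' \<omega>"] borel_measurable_add)
  then have S: "S \<in> L0 M (sets M) Rplus"
    using nonneg unfolding S_def by (rule L0_Rplus_I)
  have \<xi>t: "\<xi> t \<in> Nset M H A F t" using \<xi> tT unfolding inN_def by blast
  have "inN M H T A F (\<xi>(t := (\<lambda>\<omega>. 0)))"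
    using \<xi> zero_in_Nset[OF set bF] unfolding inN_def by simp
  from wealth_sum_in_Aset[OF set bF this \<xi>' tT]
  have "AE \<omega> in M. V t (\<xi>(t := (\<lambda>\<omega>. 0))) \<omega> + V t \<xi>' \<omega> = 0"
    by (rule NAs_EF_vanish[OF nas ef tT _ \<xi>t S]) (simp add: S_def V_drop_last)
  then have "AE \<omega> in M. \<xi> t \<omega> \<in> Rplus"
    using nonneg by eventually_elim (simp add: V_drop_last algebra_simps)
  then show ?thesis by (rule NAs_EF_nonneg_Nset_zero[OF set bF nas ef tT \<xi>t])
qed

lemma NAs_EF_nonneg_wealth_zero:
  assumes set: "setting M H T A" and bF: "boldF M T A F"
    and nas: "NAs M H T A F" and ef: "EF M H T A F"
    and \<xi>: "inN M H T A F \<xi>" and \<xi>': "inN M H T A F \<xi>'"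
  shows "t \<le> T \<Longrightarrow> AE \<omega> in M. V t \<xi> \<omega> + V t \<xi>' \<omega> \<in> Rplus \<Longrightarrow>
    \<forall>s\<le>t. (AE \<omega> in M. \<xi> s \<omega> = 0) \<and> (AE \<omega> in M. \<xi>' s \<omega> = 0)"
proof (induction t)
  case 0
  then have "AE \<omega> in M. V 0 \<xi>' \<omega> + V 0 \<xi> \<omega> \<in> Rplus" by (simp add: add.commute)
  then show ?case
    using NAs_EF_last_step_zero[OF set bF nas ef 0(1) \<xi> \<xi>' 0(2)]
      NAs_EF_last_step_zero[OF set bF nas ef 0(1) \<xi>' \<xi>] by simp
next
  case (Suc t)
  have "AE \<omega> in M. V (Suc t) \<xi>' \<omega> + V (Suc t) \<xi> \<omega> \<in> Rplus"
    using Suc.prems(2) by (simp add: add.commute)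
  then have last: "AE \<omega> in M. \<xi> (Suc t) \<omega> = 0" "AE \<omega> in M. \<xi>' (Suc t) \<omega> = 0"
    using NAs_EF_last_step_zero[OF set bF nas ef Suc.prems(1) \<xi> \<xi>' Suc.prems(2)]
      NAs_EF_last_step_zero[OF set bF nas ef Suc.prems(1) \<xi>' \<xi>] by simp_all
  from this Suc.prems(2) have "AE \<omega> in M. V t \<xi> \<omega> + V t \<xi>' \<omega> \<in> Rplus"
    by eventually_elim (simp add: V_Suc)
  with Suc.IH Suc.prems(1) last show ?case
    by (simp add: le_Suc_eq)
qed

lemma KP_if_NAs_EF:
  assumes set: "setting M H T A" and bF: "boldF M T A F"
    and nas: "NAs M H T A F" and ef: "EF M H T A F"
  shows "KP M H T A F"
  unfolding KP_def
proof (intro allI impI, elim conjE)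
  fix \<xi> \<xi>' assume \<xi>: "inN M H T A F \<xi>" and \<xi>': "inN M H T A F \<xi>'"
    and "(\<lambda>\<omega>. V T \<xi> \<omega> + V T \<xi>' \<omega>) \<in> L0 M (sets M) Rplus"
  then have "\<forall>s\<le>T. (AE \<omega> in M. \<xi> s \<omega> = 0) \<and> (AE \<omega> in M. \<xi>' s \<omega> = 0)"
    using NAs_EF_nonneg_wealth_zero[OF set bF nas ef \<xi> \<xi>' order_refl] L0_AE_mem by blast
  then have zero: "\<forall>s\<le>T. AE \<omega> in M. \<xi> s \<omega> = 0" and zero': "\<forall>s\<le>T. AE \<omega> in M. \<xi>' s \<omega> = 0"
    by simp_all
  have "AE \<omega> in M. V T \<xi> \<omega> = V T (\<lambda>_ _. 0) \<omega>" "AE \<omega> in M. V T \<xi>' \<omega> = V T (\<lambda>_ _. 0) \<omega>"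
    using V_AE_cong[OF zero order_refl] V_AE_cong[OF zero' order_refl] by simp_all
  then have "AE \<omega> in M. V T \<xi> \<omega> + V T \<xi>' \<omega> = 0"
    by eventually_elim (simp add: V_def)
  moreover have "inN0 M H T A F \<xi>"
    using zero AE_zero_in_N0set[OF set bF] unfolding inN0_def by blast
  ultimately show "inN0 M H T A F \<xi> \<and> (AE \<omega> in M. V T \<xi> \<omega> + V T \<xi>' \<omega> = 0)" by blast
qed

lemma NAr_E:
  assumes "NAr M H T A F"
  obtains G where "boldF M T A G" "NAw M H T A G"
    and "\<And>Y t. adapted_in M H T A Y \<Longrightarrow> t \<le> T \<Longrightarrow> AE \<omega> in M. F t \<omega> (Y t \<omega>) \<le> G t \<omega> (Y t \<omega>)"
    and "\<And>Y t. adapted_in M H T A Y \<Longrightarrow> t \<le> T \<Longrightarrow> (\<lambda>\<omega>. F t \<omega> (Y t \<omega>)) \<notin> N0set M H A F t \<Longrightarrow>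
      measure M {\<omega> \<in> space M. \<exists>k. G t \<omega> (Y t \<omega>) $ k > F t \<omega> (Y t \<omega>) $ k} > 0"
proof -
  obtain G where "boldF M T A G" "NAw M H T A G" and G: "\<And>Y. (\<forall>t\<le>T. Y t \<in> L0 M (H t) A) \<Longrightarrow>
      (\<forall>t\<le>T. (\<forall>i. AE \<omega> in M. G t \<omega> (Y t \<omega>) $ i \<ge> F t \<omega> (Y t \<omega>) $ i) \<and>
         ((\<lambda>\<omega>. F t \<omega> (Y t \<omega>)) \<notin> N0set M H A F t \<longrightarrow>
            measure M {\<omega> \<in> space M. \<exists>k. G t \<omega> (Y t \<omega>) $ k > F t \<omega> (Y t \<omega>) $ k} > 0))"
    using assms unfolding NAr_def by blast
  moreover have "\<forall>t\<le>T. Y t \<in> L0 M (H t) A" if "adapted_in M H T A Y" for Y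
    using that adapted_in_L0 by blast
  ultimately show thesis
    by (intro that) (auto dest!: G simp: less_eq_vec_def AE_all_countable)
qed

lemma NAw_dominating_gains_equal:
  assumes set: "setting M H T A" and bG: "boldF M T A G" and naw: "NAw M H T A G"
    and Y: "adapted_in M H T A Y" and Y': "adapted_in M H T A Y'"
    and dom: "\<forall>s\<le>T. AE \<omega> in M. f s \<omega> \<le> G s \<omega> (Y s \<omega>)"
    and dom': "\<forall>s\<le>T. AE \<omega> in M. f' s \<omega> \<le> G s \<omega> (Y' s \<omega>)"
    and nonneg: "AE \<omega> in M. V T f \<omega> + V T f' \<omega> \<in> Rplus"
  shows "AE \<omega> in M. (\<forall>s\<le>T. G s \<omega> (Y s \<omega>) = f s \<omega>) \<and> V T f \<omega> + V T f' \<omega> = 0"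
proof -
  define g where "g s \<omega> = G s \<omega> (Y s \<omega>)" for s \<omega>
  define g' where "g' s \<omega> = G s \<omega> (Y' s \<omega>)" for s \<omega>
  define X where "X \<omega> = V T g \<omega> + V T g' \<omega>" for \<omega>
  have "AE \<omega> in M. \<forall>s\<in>{..T}. f s \<omega> \<le> g s \<omega>"
    using dom unfolding g_def by (intro AE_finite_allI) simp_all
  moreover have "AE \<omega> in M. \<forall>s\<in>{..T}. f' s \<omega> \<le> g' s \<omega>"
    using dom' unfolding g'_def by (intro AE_finite_allI) simp_all
  ultimately have dominated: "AE \<omega> in M. (\<forall>s\<in>{..T}. f s \<omega> \<le> g s \<omega>) \<and>
      (\<forall>s\<in>{..T}. f' s \<omega> \<le> g' s \<omega>) \<and> V T f \<omega> + V T f' \<omega> \<in> Rplus"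
    using nonneg by eventually_elim simp
  then have "AE \<omega> in M. X \<omega> \<in> Rplus"
  proof eventually_elim
    case (elim \<omega>)
    then have "V T f \<omega> + V T f' \<omega> \<le> X \<omega>"
      unfolding X_def V_def by (intro add_mono sum_mono) auto
    with elim show ?case unfolding Rplus_iff_nonneg by (blast intro: order_trans)
  qed
  moreover have "X \<in> borel_measurable M"
    unfolding X_def g_def g'_def
    by (intro borel_measurable_add V_measurable measurable_F_adapted[OF set bG] Y Y') simp_all
  ultimately have "X \<in> L0 M (sets M) Rplus"
    using L0_Rplus_I[where X = X] by blast
  moreover have "X \<in> Aset M H T A G T"
    unfolding X_def g_def g'_def
    by (rule wealth_sum_in_Aset[OF set bG inN_adaptedI[OF Y] inN_adaptedI[OF Y'] order_refl])
  ultimately have "AE \<omega> in M. X \<omega> = 0"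
    using naw unfolding NAw_def by simp
  with dominated show ?thesis
  proof eventually_elim
    case (elim \<omega>)
    have "(\<forall>s\<in>{..T}. g s \<omega> = f s \<omega>) \<and> (\<Sum>s\<le>T. f s \<omega>) + (\<Sum>s\<le>T. f' s \<omega>) = 0"
      by (rule sums_squeezed_vec) (use elim in \<open>simp_all add: X_def V_def Rplus_iff_nonneg\<close>)
    then show ?case by (simp add: g_def V_def)
  qed
qed

lemma KP_if_NAr:
  assumes set: "setting M H T A" and bF: "boldF M T A F" and nar: "NAr M H T A F"
  shows "KP M H T A F"
  unfolding KP_def
proof (intro allI impI, elim conjE)
  obtain G where bG: "boldF M T A G" and naw: "NAw M H T A G"
    and dom: "\<And>Y t. adapted_in M H T A Y \<Longrightarrow> t \<le> T \<Longrightarrow> AE \<omega> in M. F t \<omega> (Y t \<omega>) \<le> G t \<omega> (Y t \<omega>)"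
    and strict: "\<And>Y t. adapted_in M H T A Y \<Longrightarrow> t \<le> T \<Longrightarrow> (\<lambda>\<omega>. F t \<omega> (Y t \<omega>)) \<notin> N0set M H A F t \<Longrightarrow>
      measure M {\<omega> \<in> space M. \<exists>k. G t \<omega> (Y t \<omega>) $ k > F t \<omega> (Y t \<omega>) $ k} > 0"
    using NAr_E[OF nar] by blast
  fix \<xi> \<xi>' assume \<xi>: "inN M H T A F \<xi>" and \<xi>': "inN M H T A F \<xi>'"
    and nonneg: "(\<lambda>\<omega>. V T \<xi> \<omega> + V T \<xi>' \<omega>) \<in> L0 M (sets M) Rplus"
  obtain Y where Y: "adapted_in M H T A Y" "\<forall>t\<le>T. AE \<omega> in M. \<xi> t \<omega> = F t \<omega> (Y t \<omega>)"
    using inN_adaptedE[OF \<xi>] .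
  obtain Y' where Y': "adapted_in M H T A Y'" "\<forall>t\<le>T. AE \<omega> in M. \<xi>' t \<omega> = F t \<omega> (Y' t \<omega>)"
    using inN_adaptedE[OF \<xi>'] .
  define f where "f t \<omega> = F t \<omega> (Y t \<omega>)" for t \<omega>
  define f' where "f' t \<omega> = F t \<omega> (Y' t \<omega>)" for t \<omega>
  have same_wealth: "AE \<omega> in M. V T \<xi> \<omega> + V T \<xi>' \<omega> = V T f \<omega> + V T f' \<omega>"
    using V_AE_cong[OF Y(2) order_refl] V_AE_cong[OF Y'(2) order_refl]
    unfolding f_def f'_def by eventually_elim simp
  with L0_AE_mem[OF nonneg] have "AE \<omega> in M. V T f \<omega> + V T f' \<omega> \<in> Rplus"
    by eventually_elim simp
  moreover have "\<forall>t\<le>T. AE \<omega> in M. f t \<omega> \<le> G t \<omega> (Y t \<omega>)"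
    unfolding f_def using dom[OF Y(1)] by blast
  moreover have "\<forall>t\<le>T. AE \<omega> in M. f' t \<omega> \<le> G t \<omega> (Y' t \<omega>)"
    unfolding f'_def using dom[OF Y'(1)] by blast
  ultimately have equal: "AE \<omega> in M. (\<forall>t\<le>T. G t \<omega> (Y t \<omega>) = f t \<omega>) \<and> V T f \<omega> + V T f' \<omega> = 0"
    using NAw_dominating_gains_equal[OF set bG naw Y(1) Y'(1)] by blast
  with same_wealth have "AE \<omega> in M. V T \<xi> \<omega> + V T \<xi>' \<omega> = 0"
    by eventually_elim simp
  moreover have "\<xi> t \<in> N0set M H A F t" if t: "t \<le> T" for t
  proof (rule ccontr)
    assume not_N0: "\<xi> t \<notin> N0set M H A F t"
    from Y(2) t have "AE \<omega> in M. \<xi> t \<omega> = F t \<omega> (Y t \<omega>)" by blast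
    then have "AE \<omega> in M. F t \<omega> (Y t \<omega>) = \<xi> t \<omega>" by eventually_elim simp
    with not_N0 have "(\<lambda>\<omega>. F t \<omega> (Y t \<omega>)) \<notin> N0set M H A F t"
      using N0set_AE_cong[of "\<lambda>\<omega>. F t \<omega> (Y t \<omega>)" M H A F t "\<xi> t"] by blast
    then have "measure M {\<omega> \<in> space M. \<exists>k. G t \<omega> (Y t \<omega>) $ k > F t \<omega> (Y t \<omega>) $ k} > 0"
      by (rule strict[OF Y(1) t])
    moreover from equal have "AE \<omega> in M. \<not> (\<exists>k. G t \<omega> (Y t \<omega>) $ k > F t \<omega> (Y t \<omega>) $ k)"
      unfolding f_def by eventually_elim (use t in auto)
    ultimately show False by (simp add: measure_eq_0_AE)
  qed
  ultimately show "inN0 M H T A F \<xi> \<and> (AE \<omega> in M. V T \<xi> \<omega> + V T \<xi>' \<omega> = 0)"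
    unfolding inN0_def by blast
qed

theorem mainTheorem6:
  fixes M :: "'a measure" and H :: "nat \<Rightarrow> 'a set set" and T :: nat
    and A :: "('d::finite) mat set" and F :: "('a, 'd) rmap"
  assumes "setting M H T A"
    and "boldF M T A F"
    and "NAr M H T A F \<or> (NAs M H T A F \<and> EF M H T A F)"
  shows "KP M H T A F"
  using assms KP_if_NAr KP_if_NAs_EF by blast

end
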